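(* Assume the environment is elliptic. Let $\mathfrak{m}_n\in\mathbb{R}^m$ (column vectors) satisfy $\mathfrak{m}_n=P_n\mathfrak{m}_{n+1}+R_n\mathfrak{m}_n+Q_n\mathfrak{m}_{n-1}$ for all $n$, and let $\rho_n$ (row vectors) satisfy $\rho_n=\rho_{n-1}P_{n-1}+\rho_nR_n+\rho_{n+1}Q_{n+1}$ together with $\rho_n=\rho_{n+1}\alpha_n$ and $\rho_{n+1}=\rho_n\alpha^-_{n+1}$ for all $n$. Then there exists a constant $c$ such that for all $n$ $$\rho_{n+1}Q_{n+1}(\mathfrak{m}_n-\zeta_n\mathfrak{m}_{n+1})=c,\qquad\rho_nP_n(\mathfrak{m}_{n+1}-\zeta^-_{n+1}\mathfrak{m}_n)=-c.$$
   Context: $m\ge1$; an environment is $(P_n,Q_n,R_n)_{n\in\mathbb{Z}}$, nonnegative $m\times m$ matrices with $(P_n+Q_n+R_n)\mathbf{1}=\mathbf{1}$. Norm $\|x\|=\max|x_i|$ with induced matrix norm. Ellipticity: there are $\bar\varepsilon>0$, $k_0$ with $\|R_n^{k_0}\|\le1-\bar\varepsilon$, $((I-R_n)^{-1}P_n)(i,j)\ge\bar\varepsilon$, $((I-R_n)^{-1}Q_n)(i,j)\ge\bar\varepsilon$ for all $n,i,j$. $\zeta_n=\lim_{a\to-\infty}\psi_{n,a}$, where $\psi_{a,a}$ is any stochastic matrix and $\psi_{n,a}=(I-R_n-Q_n\psi_{n-1,a})^{-1}P_n$ for $n>a$ (the limit exists, is independent of choices, and satisfies $\zeta_n=(I-R_n-Q_n\zeta_{n-1})^{-1}P_n$);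 symmetrically $\zeta^-_n$ is the stochastic sequence with $\zeta^-_n=(I-R_n-P_n\zeta^-_{n+1})^{-1}Q_n$ obtained as the analogous limit from $+\infty$. $\alpha_n=Q_{n+1}(I-R_n-Q_n\zeta_{n-1})^{-1}$ and $\alpha^-_n=P_{n-1}(I-R_n-P_n\zeta^-_{n+1})^{-1}$. *)

theory Defs
  imports "HOL-Analysis.Analysis"
begin

text \<open>Matrices are m x m real matrices, m = CARD('m). Column vectors: real^'m,
  row vectors act by v*.  Index n ranges over the integers.\<close>

definition nonneg_mat :: "real^'m^'m \<Rightarrow> bool" where
  "nonneg_mat A \<longleftrightarrow> (\<forall>i j. A$i$j \<ge> 0)"

definition ones :: "real^'m" where
  "ones = (\<chi> i. 1)"

definition environment :: "(int \<Rightarrow> real^'m^'m) \<Rightarrow> (int \<Rightarrow> real^'m^'m) \<Rightarrow> (int \<Rightarrow> real^'m^'m) \<Rightarrow> bool" where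
  "environment P Q R \<longleftrightarrow>
     (\<forall>n. nonneg_mat (P n) \<and> nonneg_mat (Q n) \<and> nonneg_mat (R n) \<and>
          (P n + Q n + R n) *v ones = ones)"

definition mat_opnorm :: "real^'m^'m \<Rightarrow> real" where
  "mat_opnorm A = (SUP x\<in>{x::real^'m. infnorm x \<le> 1}. infnorm (A *v x))"

fun mat_pow :: "real^'m^'m \<Rightarrow> nat \<Rightarrow> real^'m^'m" where
  "mat_pow A 0 = mat 1"
| "mat_pow A (Suc k) = A ** mat_pow A k"

definition elliptic :: "(int \<Rightarrow> real^'m^'m) \<Rightarrow> (int \<Rightarrow> real^'m^'m) \<Rightarrow> (int \<Rightarrow> real^'m^'m) \<Rightarrow> bool" where
  "elliptic P Q R \<longleftrightarrow>
     (\<exists>eps::real. \<exists>k0::nat. eps > 0 \<and>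
        (\<forall>n. mat_opnorm (mat_pow (R n) k0) \<le> 1 - eps \<and>
             (\<forall>i j. (matrix_inv (mat 1 - R n) ** P n)$i$j \<ge> eps) \<and>
             (\<forall>i j. (matrix_inv (mat 1 - R n) ** Q n)$i$j \<ge> eps)))"

text \<open>psi_fw P Q R a k = psi_{a+k,a}, started from psi_{a,a} = I (a stochastic matrix).\<close>
fun psi_fw :: "(int \<Rightarrow> real^'m^'m) \<Rightarrow> (int \<Rightarrow> real^'m^'m) \<Rightarrow> (int \<Rightarrow> real^'m^'m) \<Rightarrow> int \<Rightarrow> nat \<Rightarrow> real^'m^'m" where
  "psi_fw P Q R a 0 = mat 1"
| "psi_fw P Q R a (Suc k) =
     matrix_inv (mat 1 - R (a + int k + 1) - Q (a + int k + 1) ** psi_fw P Q R a k) ** P (a + int k + 1)"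

text \<open>psi_bw P Q R b k = psi^-_{b-k,b}, started from psi^-_{b,b} = I.\<close>
fun psi_bw :: "(int \<Rightarrow> real^'m^'m) \<Rightarrow> (int \<Rightarrow> real^'m^'m) \<Rightarrow> (int \<Rightarrow> real^'m^'m) \<Rightarrow> int \<Rightarrow> nat \<Rightarrow> real^'m^'m" where
  "psi_bw P Q R b 0 = mat 1"
| "psi_bw P Q R b (Suc k) =
     matrix_inv (mat 1 - R (b - int k - 1) - P (b - int k - 1) ** psi_bw P Q R b k) ** Q (b - int k - 1)"

definition zeta :: "(int \<Rightarrow> real^'m^'m) \<Rightarrow> (int \<Rightarrow> real^'m^'m) \<Rightarrow> (int \<Rightarrow> real^'m^'m) \<Rightarrow> int \<Rightarrow> real^'m^'m" where
  "zeta P Q R n = Lim at_bot (\<lambda>a. psi_fw P Q R a (nat (n - a)))"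

definition zeta_minus :: "(int \<Rightarrow> real^'m^'m) \<Rightarrow> (int \<Rightarrow> real^'m^'m) \<Rightarrow> (int \<Rightarrow> real^'m^'m) \<Rightarrow> int \<Rightarrow> real^'m^'m" where
  "zeta_minus P Q R n = Lim at_top (\<lambda>b. psi_bw P Q R b (nat (b - n)))"

definition alpha :: "(int \<Rightarrow> real^'m^'m) \<Rightarrow> (int \<Rightarrow> real^'m^'m) \<Rightarrow> (int \<Rightarrow> real^'m^'m) \<Rightarrow> int \<Rightarrow> real^'m^'m" where
  "alpha P Q R n = Q (n + 1) ** matrix_inv (mat 1 - R n - Q n ** zeta P Q R (n - 1))"

definition alpha_minus :: "(int \<Rightarrow> real^'m^'m) \<Rightarrow> (int \<Rightarrow> real^'m^'m) \<Rightarrow> (int \<Rightarrow> real^'m^'m) \<Rightarrow> int \<Rightarrow> real^'m^'m" where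
  "alpha_minus P Q R n = P (n - 1) ** matrix_inv (mat 1 - R n - P n ** zeta_minus P Q R (n + 1))"

end

theory Submission
  imports Defs
begin

text \<open>
  Summing out the lazy steps turns the recursion \<open>\<psi> \<mapsto> (I - R - Q\<psi>)\<^sup>-\<^sup>1P\<close> into the
  continued-fraction map \<open>A \<mapsto> (I - Q'A)\<^sup>-\<^sup>1P'\<close>, where \<open>P' = (I - R)\<^sup>-\<^sup>1P\<close> and
  \<open>Q' = (I - R)\<^sup>-\<^sup>1Q\<close>; ellipticity makes all entries of \<open>P'\<close> at least \<open>\<epsilon>\<close>, and
  \<open>P' + Q'\<close> is stochastic. Iterates of these maps started at a stochastic matrix and at \<open>0\<close>
  differ by a nonnegative multiple of a product of matrices with entries in \<open>[\<epsilon>, 1]\<close>. The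
  rows of such a product become proportional at the rate \<open>(1 - \<epsilon>)\<^sup>k\<close>, so all stochastic
  starts have the same limit and \<open>\<zeta>\<^sub>n\<close> is stochastic.

  Consequently the matrix inverted in \<open>\<alpha>\<^sub>n\<close> is invertible, and \<open>\<rho>\<^sub>n = \<rho>\<^sub>n\<^sub>+\<^sub>1\<alpha>\<^sub>n\<close>
  together with the equation for \<open>\<rho>\<close> yields the flux identity
  \<open>\<rho>\<^sub>n\<^sub>+\<^sub>1Q\<^sub>n\<^sub>+\<^sub>1\<zeta>\<^sub>n = \<rho>\<^sub>nP\<^sub>n\<close>. The reflection \<open>n \<mapsto> -n\<close> exchanges
  \<open>\<zeta>\<^sup>-\<close> with \<open>\<zeta>\<close> and gives \<open>\<rho>\<^sub>nP\<^sub>n\<zeta>\<^sup>-\<^sub>n\<^sub>+\<^sub>1 = \<rho>\<^sub>n\<^sub>+\<^sub>1Q\<^sub>n\<^sub>+\<^sub>1\<close>.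
  Hence the two quantities of the theorem are \<open>\<plusminus>\<close> the discrete Wronskian
  \<open>\<rho>\<^sub>n\<^sub>+\<^sub>1Q\<^sub>n\<^sub>+\<^sub>1 \<cdot> m\<^sub>n - \<rho>\<^sub>nP\<^sub>n \<cdot> m\<^sub>n\<^sub>+\<^sub>1\<close>, which the two difference
  equations keep constant.
\<close>

section \<open>Matrix algebra\<close>

lemma matrix_inv_left:
  fixes A :: "'a::semiring_1^'n^'n"
  shows "invertible A \<Longrightarrow> matrix_inv A ** A = mat 1"
  unfolding invertible_def matrix_inv_def by (rule someI2_ex) auto

lemma matrix_inv_right:
  fixes A :: "'a::semiring_1^'n^'n"
  shows "invertible A \<Longrightarrow> A ** matrix_inv A = mat 1"
  unfolding invertible_def matrix_inv_def by (rule someI2_ex) auto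

lemma matrix_inv_unique:
  fixes A B :: "'a::semiring_1^'n^'n"
  assumes "B ** A = mat 1" "A ** B = mat 1"
  shows "matrix_inv A = B"
proof -
  have "invertible A" using assms invertible_def by blast
  then have "matrix_inv A = (matrix_inv A ** A) ** B"
    by (simp add: assms(2) flip: matrix_mul_assoc)
  with \<open>invertible A\<close> show ?thesis by (simp add: matrix_inv_left)
qed

lemma matrix_inv_mult:
  fixes A B :: "'a::semiring_1^'n^'n"
  assumes "invertible A" "invertible B"
  shows "matrix_inv (A ** B) = matrix_inv B ** matrix_inv A"
proof (rule matrix_inv_unique)
  show "matrix_inv B ** matrix_inv A ** (A ** B) = mat 1"
    by (metis assms matrix_inv_left matrix_mul_assoc matrix_mul_lid)
  show "A ** B ** (matrix_inv B ** matrix_inv A) = mat 1"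
    by (metis assms matrix_inv_right matrix_mul_assoc matrix_mul_rid)
qed

lemma matrix_diff_ldistrib: "(A::'a::ring_1^'n^'m) ** (B - C) = A ** B - A ** C"
  by (simp add: matrix_matrix_mult_def vec_eq_iff sum_subtractf right_diff_distrib)

lemma matrix_diff_rdistrib: "((A::'a::ring_1^'n^'m) - B) ** C = A ** C - B ** C"
  by (simp add: matrix_matrix_mult_def vec_eq_iff sum_subtractf left_diff_distrib)

lemma matrix_add_rdistrib: "((A::'a::semiring_1^'n^'m) + B) ** C = A ** C + B ** C"
  by (simp add: matrix_matrix_mult_def vec_eq_iff sum.distrib distrib_right)

lemma matrix_mult_entry: "(A ** B) $ i $ j = (\<Sum>k\<in>UNIV. A$i$k * B$k$j)"
  by (simp add: matrix_matrix_mult_def)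

lemma matrix_mult_row: "(A ** B) $ i = A $ i v* B"
  by (simp add: vec_eq_iff matrix_matrix_mult_def vector_matrix_mult_def)

lemma nonneg_mat_mult: "nonneg_mat A \<Longrightarrow> nonneg_mat B \<Longrightarrow> nonneg_mat (A ** B)"
  unfolding nonneg_mat_def matrix_mult_entry by (auto intro!: sum_nonneg)

lemma norm_matrix_le_entry_bound:
  fixes A :: "real^'n^'m"
  assumes "\<And>i j. \<bar>A$i$j\<bar> \<le> c"
  shows "norm A \<le> real CARD('m) * real CARD('n) * c"
proof -
  have "norm A \<le> (\<Sum>i\<in>UNIV. norm (A$i))"
    unfolding norm_vec_def by (rule L2_set_le_sum) simp
  also have "\<dots> \<le> (\<Sum>i\<in>(UNIV::'m set). \<Sum>j\<in>(UNIV::'n set). c)"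
    using assms by (intro sum_mono order.trans[OF norm_le_l1_cart]) auto
  finally show ?thesis by simp
qed

section \<open>Stochastic matrices\<close>

definition row_sum :: "real^'n^'m \<Rightarrow> 'm \<Rightarrow> real" where
  "row_sum A i = (\<Sum>j\<in>UNIV. A$i$j)"

definition substochastic :: "real^'n^'n \<Rightarrow> bool" where
  "substochastic A \<longleftrightarrow> nonneg_mat A \<and> (\<forall>i. row_sum A i \<le> 1)"

definition stochastic :: "real^'n^'n \<Rightarrow> bool" where
  "stochastic A \<longleftrightarrow> nonneg_mat A \<and> (\<forall>i. row_sum A i = 1)"

lemma row_sum_mult: "row_sum (A ** B) i = (\<Sum>k\<in>UNIV. A$i$k * row_sum B k)"
  unfolding row_sum_def matrix_mult_entry sum_distrib_left by (rule sum.swap)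

lemma row_sum_mat1 [simp]: "row_sum (mat 1) i = 1"
  by (simp add: row_sum_def mat_def)

lemma row_sum_diff: "row_sum (A - B) i = row_sum A i - row_sum B i"
  unfolding row_sum_def by (simp add: sum_subtractf)

lemma row_sum_add: "row_sum (A + B) i = row_sum A i + row_sum B i"
  unfolding row_sum_def by (simp add: sum.distrib)

lemma matrix_vector_mult_ones: "(A *v ones) $ i = row_sum A i"
  by (simp add: row_sum_def matrix_vector_mult_def ones_def)

lemma entry_le_row_sum: "nonneg_mat A \<Longrightarrow> A$i$j \<le> row_sum A i"
  unfolding row_sum_def nonneg_mat_def by (rule member_le_sum) auto

lemma row_sum_nonneg: "nonneg_mat A \<Longrightarrow> 0 \<le> row_sum A i"
  unfolding row_sum_def nonneg_mat_def by (auto intro: sum_nonneg)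

lemma row_sum_mult_le:
  assumes "nonneg_mat A" "\<And>k. row_sum B k \<le> c"
  shows "row_sum (A ** B) i \<le> row_sum A i * c"
proof -
  have "row_sum (A ** B) i \<le> (\<Sum>k\<in>UNIV. A$i$k * c)"
    unfolding row_sum_mult using assms by (intro sum_mono mult_left_mono) (auto simp: nonneg_mat_def)
  also have "\<dots> = row_sum A i * c" by (simp add: row_sum_def sum_distrib_right)
  finally show ?thesis .
qed

lemma row_sum_mult_stochastic: "stochastic B \<Longrightarrow> row_sum (A ** B) i = row_sum A i"
  unfolding row_sum_mult stochastic_def by (simp add: row_sum_def)

lemma stochastic_imp_substochastic: "stochastic A \<Longrightarrow> substochastic A"
  unfolding stochastic_def substochastic_def by auto

lemma substochastic_entry_le_1: "substochastic A \<Longrightarrow> A$i$j \<le> 1"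
  unfolding substochastic_def using entry_le_row_sum order_trans by blast

lemma substochastic_0 [simp]: "substochastic 0"
  unfolding substochastic_def nonneg_mat_def row_sum_def by simp

lemma stochastic_mat1 [simp]: "stochastic (mat 1)"
  unfolding stochastic_def nonneg_mat_def row_sum_def by (simp add: mat_def)

lemma minimum_principle:
  fixes N :: "real^'n^'n"
  assumes N: "nonneg_mat N" "\<And>i. row_sum N i < 1"
    and pos: "\<And>i. 0 \<le> ((mat 1 - N) *v y) $ i"
  shows "0 \<le> y $ i"
proof (rule ccontr)
  assume "\<not> 0 \<le> y $ i"
  have "Min (range (\<lambda>j. y$j)) \<in> range (\<lambda>j. y$j)" by (intro Min_in) auto
  then obtain i0 where min: "\<And>j. y$i0 \<le> y$j" by (metis Min_le finite finite_imageI rangeE rangeI)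
  with \<open>\<not> 0 \<le> y $ i\<close> have neg: "y$i0 < 0" by (meson le_less_trans not_le)
  have "(\<Sum>j\<in>UNIV. N$i0$j * y$j) \<le> y$i0"
    using pos[of i0] unfolding matrix_vector_mult_diff_rdistrib matrix_vector_mul_lid vector_minus_component
    by (simp add: matrix_vector_mult_def)
  moreover have "row_sum N i0 * y$i0 \<le> (\<Sum>j\<in>UNIV. N$i0$j * y$j)"
    unfolding row_sum_def sum_distrib_right
    using N(1) min by (intro sum_mono mult_left_mono) (auto simp: nonneg_mat_def)
  moreover have "y$i0 < row_sum N i0 * y$i0"
    using N(2)[of i0] neg by (simp add: mult_less_cancel_right)
  ultimately show False by linarith
qed

lemma one_minus_strictly_substochastic_inverse:
  fixes N :: "real^'n^'n"
  assumes N: "nonneg_mat N" "\<And>i. row_sum N i < 1"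
  shows "invertible (mat 1 - N)" and "nonneg_mat (matrix_inv (mat 1 - N))"
proof -
  have "x = 0" if "(mat 1 - N) *v x = 0" for x
  proof -
    have "(mat 1 - N) *v (- x) = 0"
      using that matrix_vector_mult_diff_distrib[of "mat 1 - N" 0 x] by simp
    then have "0 \<le> x$i" "0 \<le> (- x)$i" for i
      using that by (metis minimum_principle[OF N] order_refl zero_index)+
    then show "x = 0" by (simp add: vec_eq_iff) (meson antisym neg_0_le_iff_le)
  qed
  then show inv: "invertible (mat 1 - N)"
    using matrix_left_invertible_ker invertible_left_inverse by blast
  show "nonneg_mat (matrix_inv (mat 1 - N))"
    unfolding nonneg_mat_def
  proof (intro allI)
    fix i j
    have unit: "(mat 1 - N) *v (matrix_inv (mat 1 - N) *v axis j 1) = axis j 1"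
      by (simp add: matrix_vector_mul_assoc matrix_inv_right[OF inv])
    have "0 \<le> (matrix_inv (mat 1 - N) *v axis j 1) $ i"
      by (rule minimum_principle[OF N]) (unfold unit, simp add: axis_def)
    then show "0 \<le> matrix_inv (mat 1 - N) $ i $ j"
      by (simp add: matrix_vector_mult_def axis_def if_distrib cong: if_cong)
  qed
qed

section \<open>The continued-fraction map\<close>

definition elliptic_step :: "real^'n^'n \<Rightarrow> real^'n^'n \<Rightarrow> real \<Rightarrow> bool" where
  "elliptic_step Pt Qt e \<longleftrightarrow>
     0 < e \<and> (\<forall>i j. e \<le> Pt$i$j) \<and> nonneg_mat Qt \<and> (\<forall>i. row_sum Pt i + row_sum Qt i = 1)"

definition cf_map :: "real^'n^'n \<Rightarrow> real^'n^'n \<Rightarrow> real^'n^'n \<Rightarrow> real^'n^'n" where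
  "cf_map Pt Qt A = matrix_inv (mat 1 - Qt ** A) ** Pt"

context
  fixes Pt Qt :: "real^'n^'n" and e :: real
  assumes step: "elliptic_step Pt Qt e"
begin

lemma elliptic_step_nonneg_Pt: "nonneg_mat Pt"
  using step unfolding elliptic_step_def nonneg_mat_def by (meson less_le_trans less_imp_le)

lemma elliptic_step_row_sum_Qt: "row_sum Qt i \<le> 1 - e"
proof -
  have "e \<le> Pt$i$i" "row_sum Pt i + row_sum Qt i = 1" using step unfolding elliptic_step_def by auto
  with entry_le_row_sum[OF elliptic_step_nonneg_Pt, of i i] show ?thesis by linarith
qed

lemma elliptic_step_bounds: "0 < e" "e \<le> 1"
proof -
  show "0 < e" using step unfolding elliptic_step_def by blast
  fix i
  have "0 \<le> row_sum Qt i" using step row_sum_nonneg unfolding elliptic_step_def by blast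
  with elliptic_step_row_sum_Qt[of i] show "e \<le> 1" by linarith
qed

lemma cf_denominator_inverse:
  assumes "substochastic A"
  shows "invertible (mat 1 - Qt ** A)" "nonneg_mat (matrix_inv (mat 1 - Qt ** A))"
proof -
  have "nonneg_mat (Qt ** A)"
    using step assms nonneg_mat_mult unfolding elliptic_step_def substochastic_def by blast
  moreover have "row_sum (Qt ** A) i < 1" for i
  proof -
    have "row_sum (Qt ** A) i \<le> row_sum Qt i * 1"
      using step assms by (intro row_sum_mult_le) (auto simp: elliptic_step_def substochastic_def)
    then show ?thesis using elliptic_step_row_sum_Qt[of i] elliptic_step_bounds by linarith
  qed
  ultimately show "invertible (mat 1 - Qt ** A)" "nonneg_mat (matrix_inv (mat 1 - Qt ** A))"
    using one_minus_strictly_substochastic_inverse by blast+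
qed

lemma cf_map_ge:
  assumes A: "substochastic A"
  shows "e \<le> cf_map Pt Qt A $i$j"
proof -
  define H where "H = matrix_inv (mat 1 - Qt ** A)"
  have "H = mat 1 + Qt ** A ** H"
    using matrix_inv_right[OF cf_denominator_inverse(1)[OF A]]
    unfolding H_def by (simp add: matrix_diff_rdistrib matrix_mul_assoc algebra_simps)
  then have "cf_map Pt Qt A = Pt + Qt ** A ** H ** Pt"
    unfolding cf_map_def H_def[symmetric] by (metis matrix_add_rdistrib matrix_mul_lid)
  moreover have "nonneg_mat (Qt ** A ** H ** Pt)"
    using step A cf_denominator_inverse(2)[OF A] elliptic_step_nonneg_Pt
    unfolding elliptic_step_def substochastic_def H_def by (blast intro: nonneg_mat_mult)
  ultimately show ?thesis
    using step unfolding elliptic_step_def nonneg_mat_def by (simp add: add_increasing2)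
qed

lemma cf_map_row_sum:
  assumes A: "substochastic A"
  shows "row_sum (cf_map Pt Qt A) i \<le> 1" and "stochastic A \<Longrightarrow> row_sum (cf_map Pt Qt A) i = 1"
proof -
  define H where "H = matrix_inv (mat 1 - Qt ** A)"
  have inverse: "row_sum (H ** (mat 1 - Qt ** A)) i = 1"
    using matrix_inv_left[OF cf_denominator_inverse(1)[OF A]] by (simp add: H_def)
  have Pt_Qt: "row_sum Pt k = 1 - row_sum Qt k" for k
    using step unfolding elliptic_step_def by (simp add: algebra_simps)
  have "row_sum (Qt ** A) k \<le> row_sum Qt k * 1" for k
    using step A by (intro row_sum_mult_le) (auto simp: elliptic_step_def substochastic_def)
  then have "row_sum Pt k \<le> row_sum (mat 1 - Qt ** A) k" for k
    by (simp add: Pt_Qt row_sum_diff)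
  then have "row_sum (H ** Pt) i \<le> row_sum (H ** (mat 1 - Qt ** A)) i"
    unfolding row_sum_mult using cf_denominator_inverse(2)[OF A]
    by (intro sum_mono mult_left_mono) (auto simp: H_def nonneg_mat_def)
  then show "row_sum (cf_map Pt Qt A) i \<le> 1"
    using inverse by (simp add: cf_map_def H_def)
  assume "stochastic A"
  then have "row_sum Pt k = row_sum (mat 1 - Qt ** A) k" for k
    by (simp add: Pt_Qt row_sum_diff row_sum_mult_stochastic)
  then show "row_sum (cf_map Pt Qt A) i = 1"
    using inverse by (simp add: cf_map_def H_def row_sum_mult)
qed

lemma substochastic_cf_map: "substochastic A \<Longrightarrow> substochastic (cf_map Pt Qt A)"
  using cf_map_ge cf_map_row_sum(1) elliptic_step_bounds
  unfolding substochastic_def[of "cf_map Pt Qt A"] nonneg_mat_def by (meson less_le_trans less_imp_le)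

lemma stochastic_cf_map: "stochastic A \<Longrightarrow> stochastic (cf_map Pt Qt A)"
  using substochastic_cf_map cf_map_row_sum(2) stochastic_imp_substochastic
  unfolding stochastic_def substochastic_def by blast

lemma cf_map_diff:
  assumes A: "substochastic A" and B: "substochastic B"
  shows "cf_map Pt Qt A - cf_map Pt Qt B = matrix_inv (mat 1 - Qt ** A) ** Qt ** (A - B) ** cf_map Pt Qt B"
proof -
  define HA where "HA = matrix_inv (mat 1 - Qt ** A)"
  define HB where "HB = matrix_inv (mat 1 - Qt ** B)"
  have "HA - HB = HA ** ((mat 1 - Qt ** B) ** HB) - (HA ** (mat 1 - Qt ** A)) ** HB"
    using matrix_inv_left[OF cf_denominator_inverse(1)[OF A]]
      matrix_inv_right[OF cf_denominator_inverse(1)[OF B]] by (simp add: HA_def HB_def)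
  also have "\<dots> = HA ** Qt ** (A - B) ** HB"
    by (simp add: matrix_mul_assoc matrix_diff_ldistrib matrix_diff_rdistrib)
  finally show ?thesis
    unfolding cf_map_def HA_def[symmetric] HB_def[symmetric]
    by (simp add: matrix_mul_assoc flip: matrix_diff_rdistrib)
qed

end

section \<open>Convergence of the iterated maps\<close>

definition ratio_band :: "real^'n \<Rightarrow> real^'n \<Rightarrow> real \<Rightarrow> real \<Rightarrow> bool" where
  "ratio_band x y lo t \<longleftrightarrow> (\<forall>k. lo * y$k \<le> x$k \<and> x$k \<le> (lo + t) * y$k)"

lemma ratio_band_column_bounds:
  fixes y u :: "real^'n" and m :: "'n \<Rightarrow> real"
  assumes y: "\<And>k. 0 < y$k" and m: "\<And>k. e \<le> m k \<and> m k \<le> 1" and e: "0 < e"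
    and u: "\<And>k. 0 \<le> u$k \<and> u$k \<le> t * y$k"
  defines "S \<equiv> \<Sum>k\<in>UNIV. y$k" and "D \<equiv> \<Sum>k\<in>UNIV. u$k" and "W \<equiv> \<Sum>k\<in>UNIV. y$k * m k"
  shows "e * D / S * W \<le> (\<Sum>k\<in>UNIV. u$k * m k)"
    and "(\<Sum>k\<in>UNIV. u$k * m k) \<le> ((1 - e) * t + e * D / S) * W"
proof -
  have S: "0 < S" unfolding S_def using y by (intro sum_pos) auto
  have D: "0 \<le> D" unfolding D_def using u by (simp add: sum_nonneg)
  have "0 \<le> W" unfolding W_def using y m e by (intro sum_nonneg mult_nonneg_nonneg) (auto intro: less_imp_le order_trans)
  moreover have "W \<le> S" unfolding W_def S_def using y m by (intro sum_mono) (simp add: mult_left_le less_imp_le)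
  ultimately have WS: "0 \<le> W / S" "W / S \<le> 1" using S by auto
  have "e * u$k \<le> u$k * m k" for k
    using mult_right_mono[of e "m k" "u$k"] u[of k] m[of k] by (simp add: mult.commute)
  then have "e * D \<le> (\<Sum>k\<in>UNIV. u$k * m k)"
    unfolding D_def sum_distrib_left by (rule sum_mono)
  moreover have "e * D / S * W \<le> e * D"
    using mult_left_le[OF WS(2), of "e * D"] D e by simp
  ultimately show "e * D / S * W \<le> (\<Sum>k\<in>UNIV. u$k * m k)" by linarith
  define c where "c = e * (W / S)"
  have c: "c \<le> m k" for k
    using m[of k] mult_left_le[OF WS(2), of e] e unfolding c_def by linarith
  have "(\<Sum>k\<in>UNIV. u$k * m k) = (\<Sum>k\<in>UNIV. u$k * (m k - c)) + c * D"
    unfolding D_def by (simp add: sum_subtractf sum_distrib_left algebra_simps)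
  also have "\<dots> \<le> (\<Sum>k\<in>UNIV. t * y$k * (m k - c)) + c * D"
    using u c by (simp add: sum_mono mult_right_mono)
  also have "(\<Sum>k\<in>UNIV. t * y$k * (m k - c)) = t * (W - c * S)"
    unfolding W_def S_def by (simp add: sum_subtractf sum_distrib_left sum_distrib_right algebra_simps)
  also have "t * (W - c * S) + c * D = ((1 - e) * t + e * D / S) * W"
    using S unfolding c_def by (simp add: field_simps)
  finally show "(\<Sum>k\<in>UNIV. u$k * m k) \<le> ((1 - e) * t + e * D / S) * W" .
qed

lemma ratio_band_mult:
  fixes x y :: "real^'n" and M :: "real^'m^'n"
  assumes y: "\<And>k. 0 < y$k" and M: "\<And>k j. e \<le> M$k$j \<and> M$k$j \<le> 1" and e: "0 < e"
    and band: "ratio_band x y lo t"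
  shows "\<exists>lo'. lo \<le> lo' \<and> ratio_band (x v* M) (y v* M) lo' ((1 - e) * t)"
proof -
  define u where "u = x - lo *\<^sub>R y"
  define lo' where "lo' = lo + e * (\<Sum>k\<in>UNIV. u$k) / (\<Sum>k\<in>UNIV. y$k)"
  have u: "0 \<le> u$k \<and> u$k \<le> t * y$k" for k
    using band unfolding ratio_band_def u_def by (auto simp: algebra_simps)
  have "(x v* M)$j = lo * (y v* M)$j + (\<Sum>k\<in>UNIV. u$k * M$k$j)" for j
    unfolding vector_matrix_mult_def u_def by (simp add: sum_distrib_left algebra_simps flip: sum.distrib)
  moreover have "(y v* M)$j = (\<Sum>k\<in>UNIV. y$k * M$k$j)" for j
    unfolding vector_matrix_mult_def by simp
  ultimately have "ratio_band (x v* M) (y v* M) lo' ((1 - e) * t)"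
    using ratio_band_column_bounds[OF y M e u] unfolding ratio_band_def lo'_def by (simp add: algebra_simps)
  moreover have "0 \<le> (\<Sum>k\<in>UNIV. u$k)" "0 < (\<Sum>k\<in>UNIV. y$k)"
    using u y by (auto intro: sum_nonneg sum_pos)
  then have "lo \<le> lo'" unfolding lo'_def using e by simp
  ultimately show ?thesis by blast
qed

lemma ratio_band_normalized_close:
  fixes x y :: "real^'n"
  assumes y: "\<And>k. 0 < y$k" and lo: "0 < lo" and t: "0 \<le> t" and band: "ratio_band x y lo t"
  shows "\<bar>x$j / (\<Sum>k\<in>UNIV. x$k) - y$j / (\<Sum>k\<in>UNIV. y$k)\<bar> \<le> t / lo"
proof -
  define Sx where "Sx = (\<Sum>k\<in>UNIV. x$k)"
  define Sy where "Sy = (\<Sum>k\<in>UNIV. y$k)"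
  define q where "q = y$j / Sy"
  have Sy: "0 < Sy" unfolding Sy_def using y by (intro sum_pos) auto
  have Sx: "lo * Sy \<le> Sx" "Sx \<le> (lo + t) * Sy"
    unfolding Sx_def Sy_def sum_distrib_left using band by (auto intro: sum_mono simp: ratio_band_def)
  have q: "0 \<le> q" "q \<le> 1"
    using y Sy member_le_sum[of j UNIV "\<lambda>k. y$k"] unfolding q_def Sy_def by (auto simp: less_imp_le)
  have xj: "lo * y$j \<le> x$j" "x$j \<le> (lo + t) * y$j" using band unfolding ratio_band_def by auto
  have "0 < lo * y$j" "0 < lo * Sy" using lo y Sy by simp_all
  with xj Sx have pos: "0 \<le> x$j" "0 < Sx" by linarith+
  have "x$j / Sx \<le> (lo + t) * y$j / (lo * Sy)"
    using xj Sx lo Sy y[of j] t by (intro frac_le) auto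
  also have "\<dots> = q + t / lo * q" using lo Sy unfolding q_def by (simp add: field_simps)
  also have "\<dots> \<le> q + t / lo" using mult_right_le_one_le[of "t / lo" q] q lo t by simp
  finally have upper: "x$j / Sx - q \<le> t / lo" by simp
  have "0 < lo + t" using lo t by simp
  then have "q - t / (lo + t) * q = q * (lo / (lo + t))" by (simp add: field_simps)
  also have "\<dots> = lo * y$j / ((lo + t) * Sy)" unfolding q_def by (simp add: ac_simps)
  also have "\<dots> \<le> x$j / Sx"
    using xj Sx pos by (intro frac_le) auto
  finally have "q - x$j / Sx \<le> t / (lo + t) * q" by simp
  also have "\<dots> \<le> t / (lo + t)" using mult_right_le_one_le[of "t / (lo + t)" q] q \<open>0 < lo + t\<close> t by simp
  also have "\<dots> \<le> t / lo" using lo t by (intro frac_le) auto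
  finally show ?thesis using upper unfolding Sx_def[symmetric] Sy_def[symmetric] q_def abs_le_iff by linarith
qed

lemma mult_nearly_proportional_rows_close:
  fixes C C' K :: "real^'n^'n"
  assumes C: "nonneg_mat C" "nonneg_mat C'" and K: "\<And>l. 0 < row_sum K l"
    and close: "\<And>l l'. \<bar>K$l$j / row_sum K l - K$l'$j / row_sum K l'\<bar> \<le> d"
    and same: "row_sum (C ** K) i = row_sum (C' ** K) i"
  shows "\<bar>(C ** K)$i$j - (C' ** K)$i$j\<bar> \<le> 2 * d * row_sum (C ** K) i"
proof -
  obtain l0 :: 'n where True by simp
  define s where "s l = row_sum K l" for l
  define D where "D l = C$i$l - C'$i$l" for l
  define v where "v l = K$l$j / s l - K$l0$j / s l0" for l
  have split: "D l * K$l$j = D l * s l * v l + D l * s l * (K$l0$j / s l0)" for l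
    using K[of l] unfolding v_def s_def by (simp add: field_simps)
  have "(C ** K)$i$j - (C' ** K)$i$j = (\<Sum>l\<in>UNIV. D l * K$l$j)"
    unfolding matrix_mult_entry D_def by (simp add: sum_subtractf left_diff_distrib)
  also have "\<dots> = (\<Sum>l\<in>UNIV. D l * s l * v l) + (\<Sum>l\<in>UNIV. D l * s l) * (K$l0$j / s l0)"
    unfolding split by (simp add: sum.distrib sum_distrib_right sum_divide_distrib)
  also have "(\<Sum>l\<in>UNIV. D l * s l) = 0"
    using same unfolding row_sum_mult D_def s_def by (simp add: sum_subtractf left_diff_distrib)
  finally have diff: "(C ** K)$i$j - (C' ** K)$i$j = (\<Sum>l\<in>UNIV. D l * s l * v l)" by simp
  have "\<bar>\<Sum>l\<in>UNIV. D l * s l * v l\<bar> \<le> (\<Sum>l\<in>UNIV. (C$i$l + C'$i$l) * s l * d)"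
  proof (rule order.trans[OF sum_abs sum_mono])
    fix l
    have "\<bar>D l\<bar> \<le> C$i$l + C'$i$l" using C unfolding D_def nonneg_mat_def by (simp add: abs_le_iff)
    then show "\<bar>D l * s l * v l\<bar> \<le> (C$i$l + C'$i$l) * s l * d"
      using close[of l l0] K[of l] unfolding abs_mult v_def s_def
      by (intro mult_mono) (auto simp: C[unfolded nonneg_mat_def] add_nonneg_nonneg)
  qed
  also have "\<dots> = d * ((\<Sum>l\<in>UNIV. C$i$l * s l) + (\<Sum>l\<in>UNIV. C'$i$l * s l))"
    by (simp add: sum.distrib sum_distrib_left algebra_simps)
  also have "\<dots> = 2 * d * row_sum (C ** K) i"
    using same unfolding s_def row_sum_mult[symmetric] by simp
  finally show ?thesis unfolding diff .
qed

lemma Cauchy_if_dist_le: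
  fixes s :: "nat \<Rightarrow> 'a::metric_space"
  assumes dist: "\<And>m p. m \<le> p \<Longrightarrow> dist (s m) (s p) \<le> \<beta> m" and \<beta>: "\<beta> \<longlonglongrightarrow> 0"
  shows "Cauchy s"
proof (rule metric_CauchyI)
  fix r :: real assume "0 < r"
  then obtain M where M: "\<And>m. m \<ge> M \<Longrightarrow> \<beta> m < r"
    using order_tendstoD(2)[OF \<beta>] unfolding eventually_sequentially by blast
  have "dist (s m) (s p) < r" if "m \<ge> M" "p \<ge> M" for m p
    using dist[of m p] dist[of p m] M[OF \<open>m \<ge> M\<close>] M[OF \<open>p \<ge> M\<close>]
    by (cases "m \<le> p") (auto simp: dist_commute)
  then show "\<exists>M. \<forall>m\<ge>M. \<forall>n\<ge>M. dist (s m) (s n) < r" by blast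
qed

lemma stochastic_limit:
  assumes "\<And>k. stochastic (s k)" and "s \<longlonglongrightarrow> L"
  shows "stochastic L"
proof -
  have entries: "(\<lambda>k. s k $ i $ j) \<longlonglongrightarrow> L $ i $ j" for i j
    by (intro tendsto_vec_nth assms)
  have "0 \<le> L$i$j" for i j
    using assms(1) by (intro LIMSEQ_le_const[OF entries]) (auto simp: stochastic_def nonneg_mat_def)
  moreover have "(\<lambda>k. row_sum (s k) i) \<longlonglongrightarrow> row_sum L i" for i
    unfolding row_sum_def by (intro tendsto_sum entries)
  then have "row_sum L i = 1" for i
    using assms(1) LIMSEQ_unique tendsto_const unfolding stochastic_def by fastforce
  ultimately show ?thesis unfolding stochastic_def nonneg_mat_def by blast
qed

fun cf_iter ::
  "(int \<Rightarrow> real^'n^'n) \<Rightarrow> (int \<Rightarrow> real^'n^'n) \<Rightarrow> int \<Rightarrow> real^'n^'n \<Rightarrow> nat \<Rightarrow> real^'n^'n"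
where
  "cf_iter Pt Qt b B 0 = B"
| "cf_iter Pt Qt b B (Suc k) = cf_map (Pt (b + int k + 1)) (Qt (b + int k + 1)) (cf_iter Pt Qt b B k)"

fun cf_prod :: "(int \<Rightarrow> real^'n^'n) \<Rightarrow> (int \<Rightarrow> real^'n^'n) \<Rightarrow> int \<Rightarrow> nat \<Rightarrow> real^'n^'n"
where
  "cf_prod Pt Qt b 0 = mat 1"
| "cf_prod Pt Qt b (Suc k) = cf_prod Pt Qt b k ** cf_iter Pt Qt b 0 (Suc k)"

lemma cf_iter_add: "cf_iter Pt Qt b B (j + k) = cf_iter Pt Qt (b + int j) (cf_iter Pt Qt b B j) k"
  by (induct k) (simp_all add: algebra_simps)

locale elliptic_steps =
  fixes Pt Qt :: "int \<Rightarrow> real^'n^'n" and e :: real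
  assumes step: "\<And>n. elliptic_step (Pt n) (Qt n) e"
begin

lemma e_bounds: "0 < e" "e \<le> 1"
  using elliptic_step_bounds[OF step] by blast+

lemma substochastic_cf_iter: "substochastic B \<Longrightarrow> substochastic (cf_iter Pt Qt b B k)"
  by (induct k) (auto intro: substochastic_cf_map[OF step])

lemma stochastic_cf_iter: "stochastic B \<Longrightarrow> stochastic (cf_iter Pt Qt b B k)"
  by (induct k) (auto intro: stochastic_cf_map[OF step])

lemma cf_iter_bounds:
  assumes "substochastic B"
  shows "e \<le> cf_iter Pt Qt b B (Suc k) $i$j" "cf_iter Pt Qt b B k $i$j \<le> 1"
  using cf_map_ge[OF step substochastic_cf_iter] substochastic_entry_le_1[OF substochastic_cf_iter]
    assms by auto

lemma cf_iter_decomposition: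
  assumes B: "substochastic B"
  shows "\<exists>C. nonneg_mat C \<and> cf_iter Pt Qt b B k = cf_iter Pt Qt b 0 k + C ** cf_prod Pt Qt b k"
proof (induct k)
  case 0
  show ?case using B unfolding substochastic_def by (intro exI[of _ B]) simp
next
  case (Suc k)
  then obtain C where C: "nonneg_mat C"
    and eq: "cf_iter Pt Qt b B k - cf_iter Pt Qt b 0 k = C ** cf_prod Pt Qt b k" by auto
  define n where "n = b + int k + 1"
  define H where "H = matrix_inv (mat 1 - Qt n ** cf_iter Pt Qt b B k)"
  have "cf_iter Pt Qt b B (Suc k) - cf_iter Pt Qt b 0 (Suc k)
      = H ** Qt n ** (C ** cf_prod Pt Qt b k) ** cf_iter Pt Qt b 0 (Suc k)"
    using cf_map_diff[OF step substochastic_cf_iter[OF B] substochastic_cf_iter[OF substochastic_0]]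
    by (simp add: n_def H_def eq)
  also have "\<dots> = (H ** Qt n ** C) ** cf_prod Pt Qt b (Suc k)"
    by (simp add: matrix_mul_assoc)
  finally have "cf_iter Pt Qt b B (Suc k) = cf_iter Pt Qt b 0 (Suc k) + (H ** Qt n ** C) ** cf_prod Pt Qt b (Suc k)"
    by (simp add: algebra_simps)
  moreover have "nonneg_mat (H ** Qt n ** C)"
    using cf_denominator_inverse(2)[OF step substochastic_cf_iter[OF B]] step C
    unfolding H_def elliptic_step_def by (blast intro: nonneg_mat_mult)
  ultimately show ?case by blast
qed

lemma cf_prod_pos: "0 < cf_prod Pt Qt b (Suc k) $ l $ j"
proof (induct k arbitrary: j)
  case 0
  show ?case using cf_iter_bounds(1)[OF substochastic_0, of b 0 l j] e_bounds by simp
next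
  case (Suc k)
  have "0 < cf_iter Pt Qt b 0 (Suc (Suc k)) $i$j" for i
    using cf_iter_bounds(1)[OF substochastic_0, of b "Suc k" i j] e_bounds(1) by linarith
  then show ?case
    unfolding cf_prod.simps(2)[of _ _ _ "Suc k"] matrix_mult_entry
    by (intro sum_pos mult_pos_pos) (simp_all add: Suc del: cf_prod.simps cf_iter.simps)
qed

lemma cf_prod_rows_band:
  "\<exists>lo. e \<le> lo \<and>
     ratio_band (cf_prod Pt Qt b (Suc k) $ l) (cf_prod Pt Qt b (Suc k) $ l') lo ((1 - e)^k / e)"
proof (induct k)
  case 0
  define M where "M = cf_iter Pt Qt b 0 (Suc 0)"
  have M: "e \<le> M$i$j" "M$i$j \<le> 1" for i j
    using cf_iter_bounds(1)[OF substochastic_0, of b 0] cf_iter_bounds(2)[OF substochastic_0, of b "Suc 0"]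
    unfolding M_def by auto
  have "e * M$l'$j \<le> M$l$j \<and> M$l$j \<le> (e + 1 / e) * M$l'$j" for j
  proof
    have "e * M$l'$j \<le> e" using mult_left_mono[of "M$l'$j" 1 e] M[of l' j] e_bounds by simp
    with M[of l j] show "e * M$l'$j \<le> M$l$j" by linarith
    have "1 \<le> M$l'$j / e" "0 \<le> e * M$l'$j" using M[of l' j] e_bounds by simp_all
    moreover have "(e + 1 / e) * M$l'$j = e * M$l'$j + M$l'$j / e" by (simp add: distrib_right)
    ultimately show "M$l$j \<le> (e + 1 / e) * M$l'$j" using M[of l j] by linarith
  qed
  then show ?case unfolding ratio_band_def M_def by (intro exI[of _ e]) simp
next
  case (Suc k)
  then obtain lo where lo: "e \<le> lo"
    and band: "ratio_band (cf_prod Pt Qt b (Suc k) $ l) (cf_prod Pt Qt b (Suc k) $ l') lo ((1 - e)^k / e)"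
    by blast
  have M: "e \<le> cf_iter Pt Qt b 0 (Suc (Suc k)) $i$j \<and> cf_iter Pt Qt b 0 (Suc (Suc k)) $i$j \<le> 1" for i j
    using cf_iter_bounds[OF substochastic_0] by blast
  obtain lo' where "lo \<le> lo'"
    "ratio_band (cf_prod Pt Qt b (Suc (Suc k)) $ l) (cf_prod Pt Qt b (Suc (Suc k)) $ l') lo' ((1 - e) * ((1 - e)^k / e))"
    using ratio_band_mult[OF cf_prod_pos M e_bounds(1) band]
    unfolding cf_prod.simps(2)[of _ _ _ "Suc k"] matrix_mult_row by auto
  with lo show ?case by (intro exI[of _ lo']) (simp add: mult.assoc)
qed

lemma cf_prod_rows_close:
  "\<bar>cf_prod Pt Qt b (Suc k) $ l $ j / row_sum (cf_prod Pt Qt b (Suc k)) l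
     - cf_prod Pt Qt b (Suc k) $ l' $ j / row_sum (cf_prod Pt Qt b (Suc k)) l'\<bar> \<le> (1 - e)^k / e / e"
proof -
  obtain lo where lo: "e \<le> lo"
    and band: "ratio_band (cf_prod Pt Qt b (Suc k) $ l) (cf_prod Pt Qt b (Suc k) $ l') lo ((1 - e)^k / e)"
    using cf_prod_rows_band by blast
  have t: "0 \<le> (1 - e)^k / e" using e_bounds by simp
  have "\<bar>cf_prod Pt Qt b (Suc k) $ l $ j / row_sum (cf_prod Pt Qt b (Suc k)) l
     - cf_prod Pt Qt b (Suc k) $ l' $ j / row_sum (cf_prod Pt Qt b (Suc k)) l'\<bar> \<le> (1 - e)^k / e / lo"
    using ratio_band_normalized_close[OF cf_prod_pos _ t band] lo e_bounds unfolding row_sum_def by simp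
  also have "\<dots> \<le> (1 - e)^k / e / e" using lo e_bounds t by (intro divide_left_mono) auto
  finally show ?thesis .
qed

lemma cf_iter_close:
  assumes B: "stochastic B" and B': "stochastic B'"
  shows "\<bar>cf_iter Pt Qt b B (Suc k) $i$j - cf_iter Pt Qt b B' (Suc k) $i$j\<bar> \<le> 2 * ((1 - e)^k / e / e)"
proof -
  define K where "K = cf_prod Pt Qt b (Suc k)"
  define Z where "Z = cf_iter Pt Qt b 0 (Suc k)"
  define d where "d = (1 - e)^k / e / e"
  obtain C C' where C: "nonneg_mat C" "nonneg_mat C'"
    and X: "cf_iter Pt Qt b B (Suc k) = Z + C ** K" and X': "cf_iter Pt Qt b B' (Suc k) = Z + C' ** K"
    using cf_iter_decomposition stochastic_imp_substochastic B B' unfolding K_def Z_def by meson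
  have rows: "row_sum Z i + row_sum (C ** K) i = 1" "row_sum Z i + row_sum (C' ** K) i = 1"
    using stochastic_cf_iter[OF B, of b "Suc k"] stochastic_cf_iter[OF B', of b "Suc k"]
    unfolding X X' stochastic_def by (auto simp: row_sum_add)
  have "0 \<le> row_sum Z i"
    using substochastic_cf_iter[OF substochastic_0] row_sum_nonneg unfolding substochastic_def Z_def by blast
  with rows have "row_sum (C ** K) i \<le> 1" by linarith
  moreover have "0 < row_sum K l" for l
    unfolding row_sum_def K_def using cf_prod_pos by (intro sum_pos) auto
  then have "\<bar>(C ** K)$i$j - (C' ** K)$i$j\<bar> \<le> 2 * d * row_sum (C ** K) i"
    using rows cf_prod_rows_close unfolding K_def d_def
    by (intro mult_nearly_proportional_rows_close[OF C]) simp_all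
  moreover have "0 \<le> d" unfolding d_def using e_bounds by simp
  ultimately have "\<bar>(C ** K)$i$j - (C' ** K)$i$j\<bar> \<le> 2 * d"
    using mult_left_le[of "row_sum (C ** K) i" "2 * d"] by linarith
  then show ?thesis unfolding X X' d_def by simp
qed

lemma Cauchy_cf_iter_from_mat1:
  "Cauchy (\<lambda>k. cf_iter Pt Qt (n - int k) (mat 1) (Suc k))" (is "Cauchy ?s")
proof (rule Cauchy_if_dist_le)
  fix k k' :: nat assume "k \<le> k'"
  then have steps: "Suc k' = (k' - k) + Suc k" and start: "n - int k' + int (k' - k) = n - int k"
    by simp_all
  define B where "B = cf_iter Pt Qt (n - int k') (mat 1) (k' - k)"
  have "?s k' = cf_iter Pt Qt (n - int k) B (Suc k)"
    unfolding steps cf_iter_add start B_def ..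
  then have "\<bar>(?s k - ?s k') $i$j\<bar> \<le> 2 * ((1 - e)^k / e / e)" for i j
    unfolding vector_minus_component B_def
    by (simp only: cf_iter_close[OF stochastic_mat1 stochastic_cf_iter[OF stochastic_mat1]])
  then show "dist (?s k) (?s k') \<le> real CARD('n) * real CARD('n) * (2 * ((1 - e)^k / e / e))"
    unfolding dist_norm by (rule norm_matrix_le_entry_bound)
next
  show "(\<lambda>k. real CARD('n) * real CARD('n) * (2 * ((1 - e)^k / e / e))) \<longlonglongrightarrow> 0"
    using e_bounds by (intro tendsto_eq_intros LIMSEQ_power_zero) auto
qed

lemma cf_iter_converges:
  "\<exists>L. stochastic L \<and> ((\<lambda>a. cf_iter Pt Qt a (mat 1) (nat (n - a))) \<longlongrightarrow> L) at_bot"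
proof -
  define s where "s k = cf_iter Pt Qt (n - 1 - int k) (mat 1) (Suc k)" for k
  obtain L where L: "s \<longlonglongrightarrow> L"
    using Cauchy_cf_iter_from_mat1 Cauchy_convergent_iff convergent_def unfolding s_def by blast
  have "stochastic L" by (rule stochastic_limit[OF _ L]) (unfold s_def, rule stochastic_cf_iter[OF stochastic_mat1])
  have "filterlim (\<lambda>a. nat (n - 1 - a)) sequentially at_bot"
    unfolding filterlim_at_top eventually_at_bot_linorder
  proof
    fix Z :: nat
    show "\<exists>N. \<forall>a\<le>N. Z \<le> nat (n - 1 - a)" by (rule exI[of _ "n - 1 - int Z"]) auto
  qed
  then have lim: "((\<lambda>a. s (nat (n - 1 - a))) \<longlongrightarrow> L) at_bot" by (rule filterlim_compose[OF L])
  have "s (nat (n - 1 - a)) = cf_iter Pt Qt a (mat 1) (nat (n - a))" if "a \<le> n - 1" for a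
  proof -
    have "n - 1 - int (nat (n - 1 - a)) = a" "Suc (nat (n - 1 - a)) = nat (n - a)" using that by auto
    then show ?thesis unfolding s_def by (simp only:)
  qed
  then have "\<forall>\<^sub>F a in at_bot. s (nat (n - 1 - a)) = cf_iter Pt Qt a (mat 1) (nat (n - a))"
    unfolding eventually_at_bot_linorder by blast
  then have "((\<lambda>a. cf_iter Pt Qt a (mat 1) (nat (n - a))) \<longlongrightarrow> L) at_bot"
    using lim by (rule tendsto_cong[THEN iffD1])
  with \<open>stochastic L\<close> show ?thesis by blast
qed

end

section \<open>Elliptic environments\<close>

lemma one_le_mat_opnorm:
  fixes A :: "real^'n^'n"
  assumes fixed: "A *v x = x" and "x \<noteq> 0"
  shows "1 \<le> mat_opnorm A"
proof -
  define y where "y = (1 / infnorm x) *\<^sub>R x"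
  have "0 < infnorm x" using \<open>x \<noteq> 0\<close> infnorm_pos_lt by blast
  then have y: "infnorm y = 1" "A *v y = y"
    unfolding y_def infnorm_mul matrix_vector_mult_scaleR fixed by simp_all
  obtain K where K: "0 < K" "\<And>z. norm (A *v z) \<le> norm z * K"
    using bounded_linear.pos_bounded[OF matrix_vector_mul_bounded_linear] by blast
  have "infnorm (A *v z) \<le> sqrt (real DIM(real^'n)) * K" if "infnorm z \<le> 1" for z
  proof -
    have "infnorm (A *v z) \<le> norm z * K" using infnorm_le_norm K(2) order_trans by blast
    also have "\<dots> \<le> sqrt (real DIM(real^'n)) * infnorm z * K"
      by (rule mult_right_mono[OF norm_le_infnorm]) (use K(1) in simp)
    also have "\<dots> \<le> sqrt (real DIM(real^'n)) * 1 * K"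
      using that K(1) by (intro mult_right_mono mult_left_mono) auto
    finally show ?thesis by simp
  qed
  then have "bdd_above ((\<lambda>z. infnorm (A *v z)) ` {z. infnorm z \<le> 1})"
    by (intro bdd_aboveI2[where M = "sqrt (real DIM(real^'n)) * K"]) simp
  then have "infnorm (A *v y) \<le> mat_opnorm A"
    unfolding mat_opnorm_def by (rule cSUP_upper[rotated]) (simp add: y)
  then show ?thesis using y by simp
qed

lemma mat_pow_fixed: "A *v x = x \<Longrightarrow> mat_pow A k *v x = x"
  by (induct k) (simp_all flip: matrix_vector_mul_assoc)

lemma elliptic_invertible_one_minus_R:
  assumes "elliptic P Q R"
  shows "invertible (mat 1 - R n)"
proof -
  obtain eps k0 where eps: "eps > 0" "mat_opnorm (mat_pow (R n) k0) \<le> 1 - eps"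
    using assms unfolding elliptic_def by blast
  have "x = 0" if "(mat 1 - R n) *v x = 0" for x
  proof (rule ccontr)
    assume "x \<noteq> 0"
    have "R n *v x = x" using that by (simp add: matrix_vector_mult_diff_rdistrib)
    then have "1 \<le> mat_opnorm (mat_pow (R n) k0)" by (rule one_le_mat_opnorm[OF mat_pow_fixed \<open>x \<noteq> 0\<close>])
    with eps show False by linarith
  qed
  then show ?thesis using matrix_left_invertible_ker invertible_left_inverse by blast
qed

text \<open>\<open>(I - R\<^sub>n)\<^sup>-\<^sup>1 P\<^sub>n\<close> is the law of the next move to the right of the walk observed only
  when it leaves its current level.\<close>

definition nonlazy :: "(int \<Rightarrow> real^'n^'n) \<Rightarrow> (int \<Rightarrow> real^'n^'n) \<Rightarrow> int \<Rightarrow> real^'n^'n" where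
  "nonlazy P R n = matrix_inv (mat 1 - R n) ** P n"

lemma elliptic_steps_nonlazy:
  assumes env: "environment P Q R" and ell: "elliptic P Q R"
  shows "\<exists>e. elliptic_steps (nonlazy P R) (nonlazy Q R) e"
proof -
  obtain eps where eps: "eps > 0"
    "\<And>n i j. eps \<le> nonlazy P R n $i$j" "\<And>n i j. eps \<le> nonlazy Q R n $i$j"
    using ell unfolding elliptic_def nonlazy_def by blast
  have "row_sum (nonlazy P R n) i + row_sum (nonlazy Q R n) i = 1" for n i
  proof -
    have "(P n + Q n) *v ones = (mat 1 - R n) *v ones"
      using env unfolding environment_def
      by (simp add: matrix_vector_mult_add_rdistrib matrix_vector_mult_diff_rdistrib algebra_simps)
    then have "(matrix_inv (mat 1 - R n) ** (P n + Q n)) *v ones = ones"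
      by (simp add: matrix_inv_left[OF elliptic_invertible_one_minus_R[OF ell]] flip: matrix_vector_mul_assoc)
          (simp add: matrix_vector_mul_assoc matrix_inv_left[OF elliptic_invertible_one_minus_R[OF ell]])
    then have "row_sum (matrix_inv (mat 1 - R n) ** (P n + Q n)) i = 1"
      by (simp add: ones_def flip: matrix_vector_mult_ones)
    then show ?thesis by (simp add: nonlazy_def matrix_add_ldistrib row_sum_add)
  qed
  then have "elliptic_step (nonlazy P R n) (nonlazy Q R n) eps" for n
    unfolding elliptic_step_def nonneg_mat_def using eps by (meson less_le_trans less_imp_le)
  then show ?thesis by (auto intro: elliptic_steps.intro)
qed

lemma lazy_factorization:
  fixes R Q A :: "real^'n^'n"
  assumes "invertible (mat 1 - R)"
  shows "mat 1 - R - Q ** A = (mat 1 - R) ** (mat 1 - (matrix_inv (mat 1 - R) ** Q) ** A)"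
proof -
  have "(mat 1 - R) ** ((matrix_inv (mat 1 - R) ** Q) ** A) = Q ** A"
    by (simp add: matrix_mul_assoc matrix_inv_right[OF assms])
  then show ?thesis by (simp add: matrix_diff_ldistrib)
qed

lemma invertible_denominator:
  assumes env: "environment P Q R" and ell: "elliptic P Q R" and A: "substochastic A"
  shows "invertible (mat 1 - R n - Q n ** A)"
proof -
  obtain e where "elliptic_steps (nonlazy P R) (nonlazy Q R) e"
    using elliptic_steps_nonlazy[OF env ell] by blast
  then have "invertible (mat 1 - (matrix_inv (mat 1 - R n) ** Q n) ** A)"
    using cf_denominator_inverse(1)[OF elliptic_steps.step A] unfolding nonlazy_def by blast
  with elliptic_invertible_one_minus_R[OF ell] show ?thesis
    unfolding lazy_factorization[OF elliptic_invertible_one_minus_R[OF ell]] by (rule invertible_mult)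
qed

lemma psi_fw_eq_cf_iter:
  assumes env: "environment P Q R" and ell: "elliptic P Q R"
  shows "psi_fw P Q R a k = cf_iter (nonlazy P R) (nonlazy Q R) a (mat 1) k"
proof (induct k)
  case (Suc k)
  obtain e where steps: "elliptic_steps (nonlazy P R) (nonlazy Q R) e"
    using elliptic_steps_nonlazy[OF env ell] by blast
  define m where "m = a + int k + 1"
  define A where "A = cf_iter (nonlazy P R) (nonlazy Q R) a (mat 1) k"
  have A: "substochastic A"
    using elliptic_steps.stochastic_cf_iter[OF steps stochastic_mat1] stochastic_imp_substochastic
    unfolding A_def by blast
  have IR: "invertible (mat 1 - R m)" by (rule elliptic_invertible_one_minus_R[OF ell])
  have "invertible (mat 1 - nonlazy Q R m ** A)"
    using cf_denominator_inverse(1)[OF elliptic_steps.step[OF steps] A] .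
  then have "matrix_inv (mat 1 - R m - Q m ** A) ** P m = cf_map (nonlazy P R m) (nonlazy Q R m) A"
    unfolding lazy_factorization[OF IR] cf_map_def
    by (simp add: matrix_inv_mult[OF IR] matrix_mul_assoc nonlazy_def)
  then show ?case using Suc by (simp add: A_def m_def)
qed simp

lemma stochastic_zeta:
  assumes env: "environment P Q R" and ell: "elliptic P Q R"
  shows "stochastic (zeta P Q R n)"
proof -
  obtain e where "elliptic_steps (nonlazy P R) (nonlazy Q R) e"
    using elliptic_steps_nonlazy[OF env ell] by blast
  then obtain L where "stochastic L"
    and "((\<lambda>a. cf_iter (nonlazy P R) (nonlazy Q R) a (mat 1) (nat (n - a))) \<longlongrightarrow> L) at_bot"
    using elliptic_steps.cf_iter_converges by blast
  then have "stochastic L" "((\<lambda>a. psi_fw P Q R a (nat (n - a))) \<longlongrightarrow> L) at_bot"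
    by (simp_all only: psi_fw_eq_cf_iter[OF env ell])
  moreover from this(2) have "zeta P Q R n = L"
    unfolding zeta_def by (rule tendsto_Lim[OF trivial_limit_at_bot_linorder])
  ultimately show ?thesis by simp
qed

lemma environment_reflect:
  "environment P Q R \<Longrightarrow> environment (\<lambda>n. Q (- n)) (\<lambda>n. P (- n)) (\<lambda>n. R (- n))"
  unfolding environment_def by (simp add: add.commute add.left_commute)

lemma elliptic_reflect:
  assumes "elliptic P Q R"
  shows "elliptic (\<lambda>n. Q (- n)) (\<lambda>n. P (- n)) (\<lambda>n. R (- n))"
proof -
  obtain eps k0 where "eps > 0" "\<forall>n. mat_opnorm (mat_pow (R n) k0) \<le> 1 - eps \<and>
      (\<forall>i j. (matrix_inv (mat 1 - R n) ** P n)$i$j \<ge> eps) \<and>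
      (\<forall>i j. (matrix_inv (mat 1 - R n) ** Q n)$i$j \<ge> eps)"
    using assms unfolding elliptic_def by blast
  then show ?thesis unfolding elliptic_def by (intro exI[of _ eps] exI[of _ k0]) auto
qed

lemma psi_bw_reflect:
  "psi_bw P Q R b k = psi_fw (\<lambda>n. Q (- n)) (\<lambda>n. P (- n)) (\<lambda>n. R (- n)) (- b) k"
  by (induct k) (simp_all add: algebra_simps)

lemma zeta_minus_reflect:
  "zeta_minus P Q R n = zeta (\<lambda>n. Q (- n)) (\<lambda>n. P (- n)) (\<lambda>n. R (- n)) (- n)"
proof -
  define g where "g a = psi_fw (\<lambda>n. Q (- n)) (\<lambda>n. P (- n)) (\<lambda>n. R (- n)) a (nat (- n - a))" for a
  have "psi_bw P Q R b (nat (b - n)) = g (- b)" for b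
  proof -
    have "nat (b - n) = nat (- n - - b)" by (rule arg_cong[where f = nat]) linarith
    then show ?thesis unfolding g_def psi_bw_reflect by (simp only:)
  qed
  then have "(\<lambda>b. psi_bw P Q R b (nat (b - n))) = (\<lambda>b. g (- b))" by (rule ext)
  then have "zeta_minus P Q R n = Lim (filtermap uminus at_bot) (\<lambda>b. g (- b))"
    unfolding zeta_minus_def at_top_mirror[where 'a=int] by (rule arg_cong)
  also have "\<dots> = Lim at_bot g"
    unfolding t2_space_class.Lim_def filterlim_filtermap by simp
  finally show ?thesis unfolding zeta_def g_def .
qed

lemma alpha_minus_reflect:
  "alpha_minus P Q R n = alpha (\<lambda>n. Q (- n)) (\<lambda>n. P (- n)) (\<lambda>n. R (- n)) (- n)"
proof -
  have "- n - 1 = - (n + 1)" "- (- n + 1) = n - 1" by simp_all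
  then show ?thesis unfolding alpha_minus_def alpha_def zeta_minus_reflect by (simp only: minus_minus)
qed

section \<open>Fluxes and the Wronskian\<close>

lemma eq_add3_cancel:
  fixes a b c x :: "'a::ab_group_add"
  shows "u = b + c + x \<Longrightarrow> u = a + b + c \<Longrightarrow> x = a"
  by (simp add: algebra_simps)

lemma flux_zeta:
  assumes env: "environment P Q R" and ell: "elliptic P Q R"
    and hrho: "\<forall>n. rho n = rho (n - 1) v* P (n - 1) + rho n v* R n + rho (n + 1) v* Q (n + 1)"
    and halpha: "\<forall>n. rho n = rho (n + 1) v* alpha P Q R n"
  shows "(rho (n + 1) v* Q (n + 1)) v* zeta P Q R n = rho n v* P n"
proof -
  define D where "D = mat 1 - R (n + 1) - Q (n + 1) ** zeta P Q R n"
  have "invertible D"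
    using invertible_denominator[OF env ell stochastic_imp_substochastic[OF stochastic_zeta[OF env ell]]]
    unfolding D_def .
  have "rho (n + 1) v* D = rho (n + 2) v* (Q (n + 2) ** (matrix_inv D ** D))"
    using halpha[rule_format, of "n + 1"]
    by (simp add: alpha_def D_def vector_matrix_mul_assoc matrix_mul_assoc add.assoc)
  also have "\<dots> = rho (n + 2) v* Q (n + 2)" by (simp add: matrix_inv_left[OF \<open>invertible D\<close>])
  finally have "rho (n + 1) v* D = rho (n + 2) v* Q (n + 2)" .
  then have "rho (n + 1)
      = rho (n + 1) v* R (n + 1) + rho (n + 2) v* Q (n + 2) + (rho (n + 1) v* Q (n + 1)) v* zeta P Q R n"
    unfolding D_def by (simp add: vector_matrix_mult_diff_rdistrib vector_matrix_mul_assoc algebra_simps)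
  moreover have "rho (n + 1) = rho n v* P n + rho (n + 1) v* R (n + 1) + rho (n + 2) v* Q (n + 2)"
    using hrho[rule_format, of "n + 1"] by (simp add: add.assoc)
  ultimately show ?thesis by (rule eq_add3_cancel)
qed

lemma flux_zeta_minus:
  assumes env: "environment P Q R" and ell: "elliptic P Q R"
    and hrho: "\<forall>n. rho n = rho (n - 1) v* P (n - 1) + rho n v* R n + rho (n + 1) v* Q (n + 1)"
    and halpham: "\<forall>n. rho (n + 1) = rho n v* alpha_minus P Q R (n + 1)"
  shows "(rho n v* P n) v* zeta_minus P Q R (n + 1) = rho (n + 1) v* Q (n + 1)"
proof -
  have "rho (- m) = rho (- (m - 1)) v* Q (- (m - 1)) + rho (- m) v* R (- m) + rho (- (m + 1)) v* P (- (m + 1))" for m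
  proof -
    have "- (m - 1) = - m + 1" "- (m + 1) = - m - 1" by simp_all
    then show ?thesis using hrho[rule_format, of "- m"] by (simp only: add.commute add.left_commute)
  qed
  moreover have "rho (- m) = rho (- (m + 1)) v* alpha (\<lambda>n. Q (- n)) (\<lambda>n. P (- n)) (\<lambda>n. R (- n)) m" for m
    using halpham[rule_format, of "- (m + 1)"] alpha_minus_reflect[of P Q R "- m"] by simp
  ultimately have "(rho (- (- (n + 1) + 1)) v* P (- (- (n + 1) + 1)))
        v* zeta (\<lambda>n. Q (- n)) (\<lambda>n. P (- n)) (\<lambda>n. R (- n)) (- (n + 1))
      = rho (- (- (n + 1))) v* Q (- (- (n + 1)))"
    using flux_zeta[OF environment_reflect[OF env] elliptic_reflect[OF ell], of "\<lambda>n. rho (- n)" "- (n + 1)"]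
    by blast
  moreover have "- (- (n + 1) + 1) = n" "- (- (n + 1)) = n + 1" by simp_all
  ultimately show ?thesis unfolding zeta_minus_reflect by (simp only:)
qed

definition wronskian ::
  "(int \<Rightarrow> real^'n^'n) \<Rightarrow> (int \<Rightarrow> real^'n^'n) \<Rightarrow> (int \<Rightarrow> real^'n) \<Rightarrow> (int \<Rightarrow> real^'n) \<Rightarrow> int \<Rightarrow> real"
where
  "wronskian P Q rho mm n = (rho (n + 1) v* Q (n + 1)) \<bullet> mm n - (rho n v* P n) \<bullet> mm (n + 1)"

lemma wronskian_constant:
  assumes hm: "\<forall>n. mm n = P n *v mm (n + 1) + R n *v mm n + Q n *v mm (n - 1)"
    and hrho: "\<forall>n. rho n = rho (n - 1) v* P (n - 1) + rho n v* R n + rho (n + 1) v* Q (n + 1)"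
  shows "wronskian P Q rho mm n = wronskian P Q rho mm 0"
proof -
  have step: "wronskian P Q rho mm n = wronskian P Q rho mm (n - 1)" for n
  proof -
    have "rho n \<bullet> mm n
        = rho n \<bullet> (P n *v mm (n + 1)) + rho n \<bullet> (R n *v mm n) + rho n \<bullet> (Q n *v mm (n - 1))"
      using hm[rule_format, of n] by (metis inner_add_right)
    moreover have "rho n \<bullet> mm n
        = (rho (n - 1) v* P (n - 1)) \<bullet> mm n + (rho n v* R n) \<bullet> mm n + (rho (n + 1) v* Q (n + 1)) \<bullet> mm n"
      using hrho[rule_format, of n] by (metis inner_add_left)
    ultimately show ?thesis unfolding wronskian_def by (simp add: dot_lmul_matrix)
  qed
  show ?thesis
  proof (induct n rule: int_induct[where k = 0])
    case (step1 i) then show ?case using step[of "i + 1"] by simp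
  next
    case (step2 i) then show ?case using step[of i] by simp
  qed simp
qed

theorem lemma4p1:
  fixes P Q R :: "int \<Rightarrow> real^'m^'m"
    and mm rho :: "int \<Rightarrow> real^'m"
  assumes env: "environment P Q R"
    and ell: "elliptic P Q R"
    and hm: "\<forall>n. mm n = P n *v mm (n + 1) + R n *v mm n + Q n *v mm (n - 1)"
    and hrho: "\<forall>n. rho n = rho (n - 1) v* P (n - 1) + rho n v* R n + rho (n + 1) v* Q (n + 1)"
    and halpha: "\<forall>n. rho n = rho (n + 1) v* alpha P Q R n"
    and halpham: "\<forall>n. rho (n + 1) = rho n v* alpha_minus P Q R (n + 1)"
  shows "\<exists>c::real. \<forall>n.
           (rho (n + 1) v* Q (n + 1)) \<bullet> (mm n - zeta P Q R n *v mm (n + 1)) = c \<and>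
           (rho n v* P n) \<bullet> (mm (n + 1) - zeta_minus P Q R (n + 1) *v mm n) = - c"
proof (intro exI allI conjI)
  fix n
  show "(rho (n + 1) v* Q (n + 1)) \<bullet> (mm n - zeta P Q R n *v mm (n + 1)) = wronskian P Q rho mm 0"
    using wronskian_constant[OF hm hrho, of n] flux_zeta[OF env ell hrho halpha, of n]
    by (simp add: wronskian_def inner_diff_right flip: dot_lmul_matrix)
  show "(rho n v* P n) \<bullet> (mm (n + 1) - zeta_minus P Q R (n + 1) *v mm n) = - wronskian P Q rho mm 0"
    using wronskian_constant[OF hm hrho, of n] flux_zeta_minus[OF env ell hrho halpham, of n]
    by (simp add: wronskian_def inner_diff_right flip: dot_lmul_matrix)
qed

end
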